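(* (Stride Lemma) Let $f,g\in\breve{\mathcal D}$ satisfy $g\lhd f$ and $\sigma(g)>0$. Then $f(\sigma(f)x)\le g(\sigma(g)x)$ for all $x\in[0,\frac1{\sigma(f)}]$ (i.e. $f_{[\sigma(f)]}\le g_{[\sigma(g)]}$), and $\sigma(g)\int f<\sigma(f)\int g$.
   Context: $\int f:=\int_0^1f(x)\,dx$. $\breve{\mathcal D}$: the set of continuous, convex, strictly decreasing $f\colon[0,1]\to[0,1]$ with $f(0)=1$, $f(1)=0$. Stride: $\sigma(g):=\sup\{\alpha\ge0:\ \alpha-x\le\alpha g(x)\ \forall x\in[0,1]\}\in[0,1]$. For $f$ and $a>0$, $f_{[a]}(x):=f(ax)$ on $[0,\frac1a]$; for $b>0$, $f_{[a]}-bg$ is considered on $[0,\min\{1,\frac1a\}]$. Sign switches: for continuous $\Delta\colon[c_0,d_0]\to\mathbb R$, a closed subinterval $[c,d]$ with $c_0<c\le d<d_0$ and $\Delta([c,d])=\{0\}$ is a sign switch if there is $\delta\in(0,\min\{c-c_0,d_0-d\}]$ with $\Delta(c-x)\Delta(d+x)<0$ for all $x\in(0,\delta]$; $\chi\Delta$ is their number. Crossing number $\chi(f,g):=\sup\{\chi(f_{[a]}-bg):a,b>0\}$. Domination $g\lhd f$: $\chi(f,g)=2$ and $g\le f$ pointwise. *)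

theory Defs
  imports "HOL-Analysis.Analysis" "HOL-Library.Extended_Nat"
begin

definition Dbreve :: "(real \<Rightarrow> real) set" where
  "Dbreve = {f. continuous_on {0..1} f \<and> convex_on {0..1} f
      \<and> (\<forall>x\<in>{0..1}. \<forall>y\<in>{0..1}. x < y \<longrightarrow> f y < f x)
      \<and> f ` {0..1} \<subseteq> {0..1} \<and> f 0 = 1 \<and> f 1 = 0}"

definition stride :: "(real \<Rightarrow> real) \<Rightarrow> real" where
  "stride g = Sup {\<alpha>. \<alpha> \<ge> 0 \<and> (\<forall>x\<in>{0..1}. \<alpha> - x \<le> \<alpha> * g x)}"

definition sign_switches :: "(real \<Rightarrow> real) \<Rightarrow> real \<Rightarrow> real \<Rightarrow> (real \<times> real) set" where
  "sign_switches \<Delta> c0 d0 = {(c, d). c0 < c \<and> c \<le> d \<and> d < d0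
      \<and> \<Delta> ` {c..d} = {0}
      \<and> (\<exists>\<delta>. 0 < \<delta> \<and> \<delta> \<le> min (c - c0) (d0 - d)
              \<and> (\<forall>x\<in>{0<..\<delta>}. \<Delta> (c - x) * \<Delta> (d + x) < 0))}"

definition num_sign_switches :: "(real \<Rightarrow> real) \<Rightarrow> real \<Rightarrow> real \<Rightarrow> enat" where
  "num_sign_switches \<Delta> c0 d0 =
     (if finite (sign_switches \<Delta> c0 d0) then enat (card (sign_switches \<Delta> c0 d0)) else \<infinity>)"

definition crossing_number :: "(real \<Rightarrow> real) \<Rightarrow> (real \<Rightarrow> real) \<Rightarrow> enat" where
  "crossing_number f g = (SUP a\<in>{0<..}. SUP b\<in>{0<..}.
       num_sign_switches (\<lambda>x. f (a * x) - b * g x) 0 (min 1 (1 / a)))"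

definition dominated :: "(real \<Rightarrow> real) \<Rightarrow> (real \<Rightarrow> real) \<Rightarrow> bool" where
  "dominated g f \<longleftrightarrow> crossing_number f g = 2 \<and> (\<forall>x\<in>{0..1}. g x \<le> f x)"

end

theory Submission
  imports Defs
begin

text \<open>
  If \<open>g\<close> dominates \<open>f\<close>, then \<open>f(a x) - b g(x)\<close> has at most two sign switches on
  \<open>[0, min 1 (1/a)]\<close>. Were \<open>f(\<sigma>(f) x) > g(\<sigma>(g) x)\<close> somewhere, then for \<open>a\<close> slightly above
  \<open>\<sigma>(f)/\<sigma>(g)\<close> and \<open>b\<close> slightly below 1 the difference would be positive near 0, negative
  where the stride of \<open>f\<close> pushes \<open>f(a x)\<close> under \<open>g\<close>, positive at the violation and negative
  near \<open>1/a\<close>: three sign changes. If \<open>\<sigma>(f) = \<sigma>(g)\<close> this forces \<open>f = g\<close>, and for equal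
  functions two sign switches already give a third sign change. Hence \<open>\<sigma>(g) < \<sigma>(f)\<close>, and
  integrating \<open>f(\<sigma>(f) x) \<le> g(\<sigma>(g) x)\<close> over \<open>[0, 1/\<sigma>(f)]\<close> gives the integral inequality,
  strictly because \<open>g(\<sigma>(g) x) > 0\<close> on \<open>[1/\<sigma>(f), 1/\<sigma>(g))\<close>.

  A sign change need not be a sign switch, since zeros may accumulate. A level \<open>b\<close> at which
  zeros of \<open>\<phi> - b \<psi>\<close> (\<open>\<phi>, \<psi>\<close> convex, \<open>\<psi> > 0\<close>) accumulate is a value of \<open>\<phi>/\<psi>\<close> at a point
  where a one-sided derivative of \<open>\<phi>/\<psi>\<close> vanishes. By a one-sided Sard lemma these levels
  form a null set, so after perturbing \<open>b\<close> all zeros are isolated and each sign change yields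
  a sign switch.
\<close>

section \<open>A one-sided Sard lemma\<close>

lemma zero_right_derivativeD:
  fixes H :: "real \<Rightarrow> real"
  assumes "(H has_real_derivative 0) (at_right z)" and "e > 0"
  obtains d where "d > 0" "\<And>w. z < w \<Longrightarrow> w < z + d \<Longrightarrow> \<bar>H w - H z\<bar> \<le> e * (w - z)"
proof -
  have "\<forall>\<^sub>F w in at_right z. \<bar>(H w - H z) / (w - z)\<bar> < e"
    using assms unfolding has_field_derivative_iff tendsto_iff dist_real_def by simp
  then obtain b where "b > z" and b: "\<And>w. z < w \<Longrightarrow> w < b \<Longrightarrow> \<bar>(H w - H z) / (w - z)\<bar> < e"
    unfolding eventually_at_right_field by blast
  show thesis
  proof
    show "b - z > 0" using \<open>b > z\<close> by simp
    fix w assume "z < w" "w < z + (b - z)"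
    then show "\<bar>H w - H z\<bar> \<le> e * (w - z)"
      using b[of w] by (simp add: abs_divide pos_divide_less_eq)
  qed
qed

lemma grid_cells_card_le:
  fixes S :: "real set"
  assumes S: "S \<subseteq> {p..q}" and "p \<le> q" "\<delta> > 0"
  shows "finite ((\<lambda>z. \<lfloor>(z - p) / \<delta>\<rfloor>) ` S)"
    and "real (card ((\<lambda>z. \<lfloor>(z - p) / \<delta>\<rfloor>) ` S)) \<le> (q - p) / \<delta> + 1"
proof -
  let ?cell = "\<lambda>z. \<lfloor>(z - p) / \<delta>\<rfloor>"
  have cells: "?cell ` S \<subseteq> {0..?cell q}"
  proof
    fix k assume "k \<in> ?cell ` S"
    then obtain z where "z \<in> S" and k: "k = ?cell z" by blast
    then have "p \<le> z" "z \<le> q" using S by auto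
    then have "0 \<le> (z - p) / \<delta>" "(z - p) / \<delta> \<le> (q - p) / \<delta>"
      using \<open>\<delta> > 0\<close> by (simp_all add: divide_right_mono)
    then show "k \<in> {0..?cell q}"
      unfolding k atLeastAtMost_iff by (metis floor_mono zero_le_floor)
  qed
  then show "finite (?cell ` S)" using finite_subset by blast
  have "0 \<le> ?cell q" using \<open>p \<le> q\<close> \<open>\<delta> > 0\<close> by simp
  have "card (?cell ` S) \<le> card {0..?cell q}"
    using cells by (intro card_mono) auto
  also have "\<dots> = nat (?cell q + 1)" by simp
  finally have "real (card (?cell ` S)) \<le> real_of_int (?cell q + 1)"
    using \<open>0 \<le> ?cell q\<close> by linarith
  then show "real (card (?cell ` S)) \<le> (q - p) / \<delta> + 1"
    using of_int_floor_le[of "(q - p) / \<delta>"] by linarith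
qed

lemma slow_points_image_cover:
  fixes H :: "real \<Rightarrow> real"
  assumes S: "S \<subseteq> {p..q}" and "p \<le> q" "\<delta> > 0" "e > 0"
    and slow: "\<And>z w. z \<in> S \<Longrightarrow> z < w \<Longrightarrow> w < z + \<delta> \<Longrightarrow> \<bar>H w - H z\<bar> \<le> e * (w - z)"
  obtains C where "compact C" "H ` S \<subseteq> C" "measure lebesgue C \<le> 2 * e * (q - p + \<delta>)"
proof -
  define cell where "cell z = \<lfloor>(z - p) / \<delta>\<rfloor>" for z
  define r where "r k = (SOME z. z \<in> S \<and> cell z = k)" for k
  define C where "C = (\<Union>k\<in>cell ` S. cball (H (r k)) (e * \<delta>))"
  have r: "r (cell z) \<in> S" "cell (r (cell z)) = cell z" if "z \<in> S" for z
    using someI[of "\<lambda>w. w \<in> S \<and> cell w = cell z" z] that unfolding r_def by auto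
  have close: "\<bar>H w - H z\<bar> \<le> e * \<delta>" if "z \<in> S" "w \<in> S" "cell w = cell z" for z w
  proof -
    have "\<bar>(w - p) / \<delta> - (z - p) / \<delta>\<bar> < 1"
      using that(3) unfolding cell_def by linarith
    then have "\<bar>w - z\<bar> < \<delta>"
      using \<open>\<delta> > 0\<close> by (simp add: diff_divide_distrib [symmetric] abs_divide)
    moreover have "\<bar>H w - H z\<bar> \<le> e * \<bar>w - z\<bar>"
      using slow[OF that(1), of w] slow[OF that(2), of z] \<open>\<bar>w - z\<bar> < \<delta>\<close>
      by (cases w z rule: linorder_cases) (auto simp: abs_minus_commute)
    ultimately show ?thesis
      using \<open>e > 0\<close> by (smt (verit) mult_left_mono)
  qed
  show thesis
  proof
    show "compact C"
      unfolding C_def cell_def using grid_cells_card_le(1)[OF assms(1-3)] by (intro compact_UN) auto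
    show "H ` S \<subseteq> C"
      unfolding C_def using close r by (fastforce simp: dist_real_def)
    have "measure lebesgue C \<le> (\<Sum>k\<in>cell ` S. measure lebesgue (cball (H (r k)) (e * \<delta>)))"
      unfolding C_def cell_def using grid_cells_card_le(1)[OF assms(1-3)]
      by (intro measure_UNION_le) auto
    also have "\<dots> = real (card (cell ` S)) * (2 * e * \<delta>)"
      using \<open>e > 0\<close> \<open>\<delta> > 0\<close> by (simp add: cball_eq_atLeastAtMost)
    also have "\<dots> \<le> ((q - p) / \<delta> + 1) * (2 * e * \<delta>)"
      unfolding cell_def using grid_cells_card_le(2)[OF assms(1-3)] \<open>e > 0\<close> \<open>\<delta> > 0\<close>
      by (intro mult_right_mono) auto
    also have "\<dots> = 2 * e * (q - p + \<delta>)"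
      using \<open>\<delta> > 0\<close> by (simp add: field_simps)
    finally show "measure lebesgue C \<le> 2 * e * (q - p + \<delta>)" .
  qed
qed

lemma incseq_compact_cover_measure_le:
  fixes S :: "nat \<Rightarrow> 'a::euclidean_space set"
  assumes "incseq S" and C: "\<And>n. compact (C n)" "\<And>n. S n \<subseteq> C n" "\<And>n. measure lebesgue (C n) \<le> e"
  obtains T where "(\<Union>n. S n) \<subseteq> T" "T \<in> lmeasurable" "measure lebesgue T \<le> e"
proof -
  define D where "D n = (\<Inter>m\<in>{n..}. C m)" for n
  have "D n \<subseteq> C n" for n unfolding D_def by auto
  have compact_D: "compact (D n)" for n
    unfolding D_def using C(1) by (intro compact_Inter) auto
  have meas_D: "measure lebesgue (D n) \<le> e" for n
    using measure_mono_fmeasurable[OF \<open>D n \<subseteq> C n\<close>] C(1,3)[of n] compact_D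
    by (meson fmeasurableD lmeasurable_compact order_trans)
  have D_mono: "(\<Union>i\<le>n. D i) = D n" for n
    unfolding D_def by fastforce
  have "S n \<subseteq> D n" for n
    unfolding D_def using \<open>incseq S\<close> C(2) by (force simp: incseq_def)
  moreover have "(\<Union>n. D n) \<in> lmeasurable" "measure lebesgue (\<Union>n. D n) \<le> e"
    using fmeasurable_countable_Union measure_countable_Union_le
    by (metis compact_D meas_D D_mono lmeasurable_compact)+
  ultimately show thesis using that[of "\<Union>n. D n"] by blast
qed

lemma negligible_image_zero_right_derivative_bounded:
  fixes H :: "real \<Rightarrow> real"
  assumes S: "S \<subseteq> {p..q}" and "p \<le> q"
    and flat: "\<And>z. z \<in> S \<Longrightarrow> (H has_real_derivative 0) (at_right z)"
  shows "negligible (H ` S)"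
  unfolding negligible_outer_le
proof (intro allI impI)
  fix \<epsilon> :: real assume "\<epsilon> > 0"
  define e where "e = \<epsilon> / (2 * (q - p + 1))"
  have "e > 0" unfolding e_def using \<open>\<epsilon> > 0\<close> \<open>p \<le> q\<close> by simp
  define Sn where
    "Sn n = {z \<in> S. \<forall>w. z < w \<longrightarrow> w < z + 1 / Suc n \<longrightarrow> \<bar>H w - H z\<bar> \<le> e * (w - z)}" for n :: nat
  have "\<exists>C. compact C \<and> H ` Sn n \<subseteq> C \<and> measure lebesgue C \<le> \<epsilon>" for n
  proof -
    obtain C where C: "compact C" "H ` Sn n \<subseteq> C"
      and meas: "measure lebesgue C \<le> 2 * e * (q - p + 1 / Suc n)"
      by (rule slow_points_image_cover[of "Sn n" p q "1 / Suc n" e H])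
        (use S \<open>p \<le> q\<close> \<open>e > 0\<close> in \<open>auto simp: Sn_def\<close>)
    have "2 * e * (q - p + 1 / Suc n) \<le> 2 * e * (q - p + 1)"
      using \<open>e > 0\<close> by (intro mult_left_mono) (auto simp: field_simps)
    also have "\<dots> = \<epsilon>" unfolding e_def using \<open>p \<le> q\<close> by (simp add: field_simps)
    finally show ?thesis using C meas by auto
  qed
  then obtain C where C: "\<And>n. compact (C n)" "\<And>n. H ` Sn n \<subseteq> C n"
    "\<And>n. measure lebesgue (C n) \<le> \<epsilon>"
    by metis
  have inc: "incseq (\<lambda>n. H ` Sn n)"
  proof (intro monoI image_mono)
    fix m n :: nat assume "m \<le> n"
    then have "1 / real (Suc n) \<le> 1 / Suc m" by (simp add: frac_le)
    then show "Sn m \<subseteq> Sn n" unfolding Sn_def by fastforce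
  qed
  obtain T where T: "(\<Union>n. H ` Sn n) \<subseteq> T" "T \<in> lmeasurable" "measure lebesgue T \<le> \<epsilon>"
    by (rule incseq_compact_cover_measure_le[OF inc C])
  have "H ` S \<subseteq> (\<Union>n. H ` Sn n)"
  proof
    fix y assume "y \<in> H ` S"
    then obtain z where "z \<in> S" "y = H z" by blast
    obtain d where "d > 0" and d: "\<And>w. z < w \<Longrightarrow> w < z + d \<Longrightarrow> \<bar>H w - H z\<bar> \<le> e * (w - z)"
      using zero_right_derivativeD[OF flat[OF \<open>z \<in> S\<close>] \<open>e > 0\<close>] by blast
    obtain n :: nat where "1 / Suc n < d"
      using \<open>d > 0\<close> by (metis inverse_eq_divide reals_Archimedean)
    then have "z \<in> Sn n" unfolding Sn_def using \<open>z \<in> S\<close> d by auto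
    then show "y \<in> (\<Union>n. H ` Sn n)" using \<open>y = H z\<close> by blast
  qed
  then show "\<exists>T. H ` S \<subseteq> T \<and> T \<in> lmeasurable \<and> measure lebesgue T \<le> \<epsilon>"
    using T by blast
qed

lemma negligible_image_zero_right_derivative:
  fixes H :: "real \<Rightarrow> real"
  assumes flat: "\<And>z. z \<in> S \<Longrightarrow> (H has_real_derivative 0) (at_right z)"
  shows "negligible (H ` S)"
proof -
  have "H ` S = (\<Union>n::nat. H ` (S \<inter> {- real n..real n}))"
  proof (intro equalityI subsetI)
    fix y assume "y \<in> H ` S"
    then obtain z where "z \<in> S" "y = H z" by blast
    obtain n :: nat where "\<bar>z\<bar> \<le> real n" using real_arch_simple by blast
    then have "z \<in> S \<inter> {- real n..real n}" using \<open>z \<in> S\<close> by (auto simp: abs_le_iff)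
    then show "y \<in> (\<Union>n::nat. H ` (S \<inter> {- real n..real n}))" using \<open>y = H z\<close> by blast
  qed auto
  also have "negligible \<dots>"
    using flat by (intro negligible_countable_Union) (auto intro!: negligible_image_zero_right_derivative_bounded)
  finally show ?thesis .
qed

section \<open>Non-isolated zeros of differences of convex functions\<close>

lemma convex_on_compose_scale:
  fixes f :: "real \<Rightarrow> real"
  assumes "convex_on S f"
  shows "convex_on ((\<lambda>x. c * x) -` S) (\<lambda>x. f (c * x))"
proof -
  have "convex ((\<lambda>x. c * x) -` S)"
    using assms by (intro convex_linear_vimage) (auto simp: convex_on_imp_convex linear_iff algebra_simps)
  moreover have "f (c * (u * x + v * y)) \<le> u * f (c * x) + v * f (c * y)"
    if "c * x \<in> S" "c * y \<in> S" "u \<ge> 0" "v \<ge> 0" "u + v = 1" for x y u v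
  proof -
    have "f (u * (c * x) + v * (c * y)) \<le> u * f (c * x) + v * f (c * y)"
      using assms that unfolding convex_on_def by simp
    then show ?thesis by (simp add: algebra_simps)
  qed
  ultimately show ?thesis unfolding convex_on_def by auto
qed

lemma convex_on_has_right_derivative:
  fixes \<phi> :: "real \<Rightarrow> real"
  assumes cv: "convex_on {a..b} \<phi>" and "a < z" "z < b"
  obtains L where "(\<phi> has_real_derivative L) (at_right z)"
proof -
  define s where "s w = (\<phi> w - \<phi> z) / (w - z)" for w
  have s_mono: "s w \<le> s w'" if "z < w" "w < w'" "w' \<le> b" for w w'
    using convex_on_slope_le(1)[OF cv, of z w' w] that \<open>a < z\<close>
    by (simp add: s_def divide_simps) (simp add: algebra_simps)
  have s_bound: "(\<phi> a - \<phi> z) / (a - z) \<le> s w" if "z < w" "w \<le> b" for w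
    using convex_on_slope_le[OF cv, of a w z] that \<open>a < z\<close>
    by (simp add: s_def divide_simps) (simp add: algebra_simps)
  define L where "L = Inf (s ` {z<..b})"
  have L_le: "L \<le> s w" if "z < w" "w \<le> b" for w
    unfolding L_def using that s_bound by (intro cInf_lower bdd_belowI2) auto
  have "(s \<longlongrightarrow> L) (at_right z)"
  proof (rule order_tendstoI)
    fix y assume "y < L"
    show "\<forall>\<^sub>F w in at_right z. y < s w"
      unfolding eventually_at_right_field
      using \<open>z < b\<close> \<open>y < L\<close> L_le by (intro exI[of _ b]) force
  next
    fix y assume "L < y"
    then obtain w' where "z < w'" "w' \<le> b" "s w' < y"
      using cInf_lessD[of "s ` {z<..b}" y] \<open>z < b\<close> unfolding L_def by auto
    then show "\<forall>\<^sub>F w in at_right z. s w < y"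
      unfolding eventually_at_right_field
      using s_mono by (intro exI[of _ w']) force
  qed
  then show thesis
    using that[of L] unfolding has_field_derivative_iff s_def by simp
qed

lemma right_derivative_eq_0_if_frequently_level:
  fixes H :: "real \<Rightarrow> real"
  assumes "(H has_real_derivative L) (at_right z)" and "\<exists>\<^sub>F w in at_right z. H w = H z"
  shows "L = 0"
proof (rule ccontr)
  assume "L \<noteq> 0"
  have "((\<lambda>w. (H w - H z) / (w - z)) \<longlongrightarrow> L) (at_right z)"
    using assms(1) unfolding has_field_derivative_iff .
  then have "\<forall>\<^sub>F w in at_right z. (H w - H z) / (w - z) \<noteq> 0"
    using \<open>L \<noteq> 0\<close> by (rule tendsto_imp_eventually_ne)
  then have "\<forall>\<^sub>F w in at_right z. H w \<noteq> H z"
    by (rule eventually_mono) auto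
  then show False
    using assms(2) by (simp add: frequently_def)
qed

lemma convex_quotient_zero_right_derivative:
  fixes \<phi> \<psi> :: "real \<Rightarrow> real"
  assumes "convex_on {a..b} \<phi>" "convex_on {a..b} \<psi>" "a < z" "z < b" "\<psi> z \<noteq> 0"
    and "\<exists>\<^sub>F w in at_right z. \<phi> w / \<psi> w = \<phi> z / \<psi> z"
  shows "((\<lambda>x. \<phi> x / \<psi> x) has_real_derivative 0) (at_right z)"
proof -
  obtain L\<phi> L\<psi> where "(\<phi> has_real_derivative L\<phi>) (at_right z)" "(\<psi> has_real_derivative L\<psi>) (at_right z)"
    using convex_on_has_right_derivative assms(1-4) by metis
  then have deriv: "((\<lambda>x. \<phi> x / \<psi> x) has_real_derivative (L\<phi> * \<psi> z - \<phi> z * L\<psi>) / (\<psi> z * \<psi> z)) (at_right z)"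
    using \<open>\<psi> z \<noteq> 0\<close> by (rule DERIV_divide)
  moreover have "(L\<phi> * \<psi> z - \<phi> z * L\<psi>) / (\<psi> z * \<psi> z) = 0"
    using right_derivative_eq_0_if_frequently_level[OF deriv] assms(6) by simp
  ultimately show ?thesis by simp
qed

definition accumulating_zero_levels ::
    "(real \<Rightarrow> real) \<Rightarrow> (real \<Rightarrow> real) \<Rightarrow> (real \<Rightarrow> real filter) \<Rightarrow> real set \<Rightarrow> real set" where
  "accumulating_zero_levels \<phi> \<psi> F I = {c. \<exists>z\<in>I. \<phi> z = c * \<psi> z \<and> (\<exists>\<^sub>F w in F z. \<phi> w = c * \<psi> w)}"

lemma negligible_right_accumulating_zero_levels:
  fixes \<phi> \<psi> :: "real \<Rightarrow> real"
  assumes "convex_on {a..b} \<phi>" "convex_on {a..b} \<psi>" and pos: "\<And>x. x \<in> {a<..<b} \<Longrightarrow> \<psi> x > 0"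
  shows "negligible (accumulating_zero_levels \<phi> \<psi> at_right {a<..<b})"
proof -
  let ?H = "\<lambda>x. \<phi> x / \<psi> x"
  have "accumulating_zero_levels \<phi> \<psi> at_right {a<..<b}
      \<subseteq> ?H ` {z \<in> {a<..<b}. (?H has_real_derivative 0) (at_right z)}"
  proof
    fix c assume "c \<in> accumulating_zero_levels \<phi> \<psi> at_right {a<..<b}"
    then obtain z where z: "z \<in> {a<..<b}" "\<phi> z = c * \<psi> z"
      and freq: "\<exists>\<^sub>F w in at_right z. \<phi> w = c * \<psi> w"
      unfolding accumulating_zero_levels_def by blast
    have c: "c = ?H z" using z pos[of z] by simp
    have near: "\<forall>\<^sub>F w in at_right z. w \<in> {a<..<b}"
      using z unfolding eventually_at_right_field by (intro exI[of _ b]) auto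
    have H_eq: "?H w = ?H z" if "w \<in> {a<..<b}" "\<phi> w = c * \<psi> w" for w
      using pos[OF that(1)] that(2) c by simp
    have "\<forall>\<^sub>F w in at_right z. \<phi> w = c * \<psi> w \<longrightarrow> ?H w = ?H z"
      using near by (rule eventually_mono) (blast intro: H_eq)
    then have "\<exists>\<^sub>F w in at_right z. ?H w = ?H z"
      by (rule frequently_rev_mp[OF freq])
    then have "(?H has_real_derivative 0) (at_right z)"
      using z pos[of z] assms(1,2) by (intro convex_quotient_zero_right_derivative[where a = a and b = b]) auto
    then show "c \<in> ?H ` {z \<in> {a<..<b}. (?H has_real_derivative 0) (at_right z)}"
      using z c by blast
  qed
  then show ?thesis
    by (rule negligible_subset[OF negligible_image_zero_right_derivative, rotated]) auto
qed

lemma negligible_accumulating_zero_levels: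
  fixes \<phi> \<psi> :: "real \<Rightarrow> real"
  assumes \<phi>: "convex_on {a..b} \<phi>" and \<psi>: "convex_on {a..b} \<psi>"
    and pos: "\<And>x. x \<in> {a<..<b} \<Longrightarrow> \<psi> x > 0"
  shows "negligible (accumulating_zero_levels \<phi> \<psi> at {a<..<b})"
proof -
  let ?L = "accumulating_zero_levels (\<lambda>x. \<phi> (- x)) (\<lambda>x. \<psi> (- x)) at_right {-b<..<-a}"
  let ?R = "accumulating_zero_levels \<phi> \<psi> at_right {a<..<b}"
  have reflect: "(\<lambda>x. -1 * x) -` {a..b} = {-b..-a}" by auto
  have "convex_on {-b..-a} (\<lambda>x. \<phi> (- x))" "convex_on {-b..-a} (\<lambda>x. \<psi> (- x))"
    using convex_on_compose_scale[OF \<phi>, of "-1"] convex_on_compose_scale[OF \<psi>, of "-1"]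
    by (simp_all only: reflect) simp_all
  then have "negligible ?L"
    using pos by (intro negligible_right_accumulating_zero_levels) auto
  moreover have "negligible ?R"
    using \<phi> \<psi> pos by (rule negligible_right_accumulating_zero_levels)
  moreover have "accumulating_zero_levels \<phi> \<psi> at {a<..<b} \<subseteq> ?R \<union> ?L"
  proof
    fix c assume "c \<in> accumulating_zero_levels \<phi> \<psi> at {a<..<b}"
    then obtain z where z: "z \<in> {a<..<b}" "\<phi> z = c * \<psi> z" and freq: "\<exists>\<^sub>F w in at z. \<phi> w = c * \<psi> w"
      unfolding accumulating_zero_levels_def by blast
    then have "(\<exists>\<^sub>F w in at_right (- z). \<phi> (- w) = c * \<psi> (- w)) \<or> (\<exists>\<^sub>F w in at_right z. \<phi> w = c * \<psi> w)"
      by (simp add: frequently_def eventually_at_split at_left_minus eventually_filtermap)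
    then show "c \<in> ?R \<union> ?L"
      using z unfolding accumulating_zero_levels_def by force
  qed
  ultimately show ?thesis
    using negligible_subset negligible_Un by blast
qed

section \<open>Sign switches\<close>

lemma sign_switchesD:
  assumes "(c, d) \<in> sign_switches \<Delta> c0 d0"
  shows "c0 < c" "c \<le> d" "d < d0" "\<And>y. y \<in> {c..d} \<Longrightarrow> \<Delta> y = 0"
    and "\<exists>\<delta>>0. \<delta> \<le> c - c0 \<and> \<delta> \<le> d0 - d \<and> (\<forall>x\<in>{0<..\<delta>}. \<Delta> (c - x) * \<Delta> (d + x) < 0)"
  using assms unfolding sign_switches_def by (auto simp: image_subset_iff)

lemma sign_switch_pointI:
  assumes "c0 < z" "z < d0" "\<Delta> z = 0" "\<delta> > 0" "\<delta> \<le> z - c0" "\<delta> \<le> d0 - z"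
    and "\<And>x. x \<in> {0<..\<delta>} \<Longrightarrow> \<Delta> (z - x) * \<Delta> (z + x) < 0"
  shows "(z, z) \<in> sign_switches \<Delta> c0 d0"
  using assms unfolding sign_switches_def by auto

lemma sign_switches_uminus: "sign_switches (\<lambda>x. - \<Delta> x) c0 d0 = sign_switches \<Delta> c0 d0"
proof -
  have "(\<lambda>x. - \<Delta> x) ` A = {0} \<longleftrightarrow> \<Delta> ` A = {0}" for A
  proof -
    have "(\<lambda>x. - \<Delta> x) ` A = uminus ` \<Delta> ` A" by (simp add: image_image)
    moreover have "{0} = uminus ` {0::real}" by simp
    ultimately show ?thesis by (metis inj_image_eq_iff inj_uminus)
  qed
  then show ?thesis unfolding sign_switches_def by simp
qed

lemma sign_switches_no_overlap:
  assumes s: "(c, d) \<in> sign_switches \<Delta> c0 d0" "(c', d') \<in> sign_switches \<Delta> c0 d0"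
    and lt: "c < c' \<or> (c = c' \<and> d < d')"
  shows "d < c'"
proof (rule ccontr)
  assume "\<not> d < c'"
  consider "c < c'" | "c = c'" "d < d'" using lt by blast
  then show False
  proof cases
    case 1
    obtain \<delta> where "\<delta> > 0" and \<delta>: "\<forall>x\<in>{0<..\<delta>}. \<Delta> (c' - x) * \<Delta> (d' + x) < 0"
      using sign_switchesD(5)[OF s(2)] by blast
    define x where "x = min \<delta> (c' - c)"
    have "x \<in> {0<..\<delta>}" using \<open>\<delta> > 0\<close> 1 unfolding x_def by auto
    moreover have "\<Delta> (c' - x) = 0"
      using sign_switchesD(4)[OF s(1), of "c' - x"] \<open>\<not> d < c'\<close> \<open>x \<in> {0<..\<delta>}\<close>
      unfolding x_def by (auto simp: min_def)
    ultimately show False using \<delta> by fastforce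
  next
    case 2
    obtain \<delta> where "\<delta> > 0" and \<delta>: "\<forall>x\<in>{0<..\<delta>}. \<Delta> (c - x) * \<Delta> (d + x) < 0"
      using sign_switchesD(5)[OF s(1)] by blast
    define x where "x = min \<delta> (d' - d)"
    have "x \<in> {0<..\<delta>}" using \<open>\<delta> > 0\<close> 2 unfolding x_def by auto
    moreover have "\<Delta> (d + x) = 0"
      using sign_switchesD(4)[OF s(2), of "d + x"] sign_switchesD(2)[OF s(1)] 2 \<open>x \<in> {0<..\<delta>}\<close>
      unfolding x_def by (auto simp: min_def)
    ultimately show False using \<delta> by fastforce
  qed
qed

lemma sign_switches_disjoint:
  assumes "(c1, d1) \<in> sign_switches \<Delta> c0 d0" "(c2, d2) \<in> sign_switches \<Delta> c0 d0"
    and "(c1, d1) \<noteq> (c2, d2)"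
  shows "d1 < c2 \<or> d2 < c1"
proof -
  consider "c1 < c2 \<or> (c1 = c2 \<and> d1 < d2)" | "c2 < c1 \<or> (c2 = c1 \<and> d2 < d1)"
    using assms(3) by fastforce
  then show ?thesis
    using sign_switches_no_overlap assms(1,2) by cases blast+
qed

lemma card_le_num_sign_switches:
  assumes "T \<subseteq> sign_switches \<Delta> c0 d0" "finite T"
  shows "enat (card T) \<le> num_sign_switches \<Delta> c0 d0"
  using assms card_mono unfolding num_sign_switches_def by auto

lemma obtain_sign_switches:
  assumes "enat n \<le> num_sign_switches \<Delta> c0 d0"
  obtains T where "T \<subseteq> sign_switches \<Delta> c0 d0" "finite T" "card T = n"
proof (cases "finite (sign_switches \<Delta> c0 d0)")
  case True
  then show thesis
    using assms that obtain_subset_with_card_n[of n "sign_switches \<Delta> c0 d0"]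
    unfolding num_sign_switches_def by (auto intro: finite_subset)
next
  case False
  then show thesis using that infinite_arbitrarily_large by blast
qed

lemma obtain_ordered_sign_switches:
  assumes "enat 2 \<le> num_sign_switches \<Delta> c0 d0"
  obtains c1 d1 c2 d2 where "(c1, d1) \<in> sign_switches \<Delta> c0 d0" "(c2, d2) \<in> sign_switches \<Delta> c0 d0"
    "d1 < c2"
proof -
  obtain T where "T \<subseteq> sign_switches \<Delta> c0 d0" "finite T" "card T = 2"
    using assms by (rule obtain_sign_switches)
  then obtain c d c' d' where sw: "(c, d) \<in> sign_switches \<Delta> c0 d0" "(c', d') \<in> sign_switches \<Delta> c0 d0"
    and "(c, d) \<noteq> (c', d')"
    unfolding card_2_iff by auto
  then have "d < c' \<or> d' < c" by (rule sign_switches_disjoint)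
  then show thesis using that sw by blast
qed

lemma three_le_num_sign_switches:
  assumes "(x1, x1) \<in> sign_switches \<Delta> c0 d0" "(x2, x2) \<in> sign_switches \<Delta> c0 d0"
    "(x3, x3) \<in> sign_switches \<Delta> c0 d0" and "x1 < x2" "x2 < x3"
  shows "3 \<le> num_sign_switches \<Delta> c0 d0"
proof -
  have "card {(x1, x1), (x2, x2), (x3, x3)} = 3" using assms(4,5) by auto
  then show ?thesis
    using card_le_num_sign_switches[of "{(x1, x1), (x2, x2), (x3, x3)}"] assms(1-3)
    by (simp add: numeral_eq_enat)
qed

lemma sign_change_point:
  fixes \<Delta> :: "real \<Rightarrow> real"
  assumes cont: "continuous_on {p..q} \<Delta>" and "p \<le> q" "\<Delta> p > 0" "\<Delta> q < 0"
  obtains z where "z \<in> {p<..<q}" "\<Delta> z = 0" "\<And>y. y \<in> {p..<z} \<Longrightarrow> \<Delta> y \<ge> 0"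
    "\<And>\<epsilon>. \<epsilon> > 0 \<Longrightarrow> \<exists>y. z < y \<and> y < z + \<epsilon> \<and> \<Delta> y < 0"
proof -
  define T where "T = {y \<in> {p..q}. \<Delta> y < 0}"
  define z where "z = Inf T"
  have "q \<in> T" using assms by (auto simp: T_def intro: less_imp_le)
  have bdd: "bdd_below T" unfolding T_def by (auto intro: bdd_belowI[of _ p])
  have "z \<le> q" unfolding z_def using \<open>q \<in> T\<close> bdd by (rule cInf_lower)
  have "p \<le> z" unfolding z_def using \<open>q \<in> T\<close> by (intro cInf_greatest) (auto simp: T_def)
  have T_above: "z \<le> y" if "y \<in> T" for y unfolding z_def using that bdd by (rule cInf_lower)
  have nonneg: "\<Delta> y \<ge> 0" if "y \<in> {p..<z}" for y
    using T_above[of y] that \<open>z \<le> q\<close> by (force simp: T_def)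
  have close: "\<exists>y\<in>T. y < z + \<epsilon>" if "\<epsilon> > 0" for \<epsilon>
    using cInf_lessD[of T "z + \<epsilon>"] \<open>q \<in> T\<close> that unfolding z_def by auto
  have "z \<in> closure T"
    unfolding z_def using \<open>q \<in> T\<close> bdd by (intro closure_contains_Inf) auto
  moreover have "closure T \<subseteq> {y \<in> {p..q}. \<Delta> y \<le> 0}"
    using cont by (intro closure_minimal continuous_on_closed_Collect_le) (auto simp: T_def)
  ultimately have "\<Delta> z \<le> 0" by auto
  then have "p < z" using \<open>p \<le> z\<close> \<open>\<Delta> p > 0\<close> by (cases "p = z") auto
  have "\<Delta> z \<ge> 0"
  proof -
    have "(\<Delta> \<longlongrightarrow> \<Delta> z) (at_left z)"
      using continuous_on_subset[OF cont, of "{p..z}"] \<open>p < z\<close> \<open>z \<le> q\<close>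
      by (intro continuous_on_Icc_at_leftD) auto
    moreover have "\<forall>\<^sub>F y in at_left z. \<Delta> y \<ge> 0"
      using \<open>p < z\<close> nonneg unfolding eventually_at_left_field by (intro exI[of _ p]) auto
    ultimately show ?thesis by (rule tendsto_lowerbound) simp
  qed
  with \<open>\<Delta> z \<le> 0\<close> have "\<Delta> z = 0" by simp
  then have "z < q" using \<open>z \<le> q\<close> \<open>\<Delta> q < 0\<close> by (cases "z = q") auto
  show thesis
  proof (rule that)
    show "z \<in> {p<..<q}" using \<open>p < z\<close> \<open>z < q\<close> by simp
    show "\<exists>y. z < y \<and> y < z + \<epsilon> \<and> \<Delta> y < 0" if "\<epsilon> > 0" for \<epsilon>
    proof -
      obtain y where "y \<in> T" "y < z + \<epsilon>" using close \<open>\<epsilon> > 0\<close> by blast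
      then have "z \<le> y" "\<Delta> y < 0" using T_above by (auto simp: T_def)
      then have "z < y" using \<open>\<Delta> z = 0\<close> by (cases "y = z") auto
      then show ?thesis using \<open>y < z + \<epsilon>\<close> \<open>\<Delta> y < 0\<close> by blast
    qed
  qed (use \<open>\<Delta> z = 0\<close> nonneg in auto)
qed

lemma sign_switch_between_pos:
  fixes \<Delta> :: "real \<Rightarrow> real"
  assumes cont: "continuous_on {p..q} \<Delta>" and "c0 < p" "p < q" "q < d0" and "\<Delta> p > 0" "\<Delta> q < 0"
    and iso: "\<And>z. z \<in> {p<..<q} \<Longrightarrow> \<Delta> z = 0 \<Longrightarrow> \<forall>\<^sub>F w in at z. \<Delta> w \<noteq> 0"
  obtains z where "z \<in> {p<..<q}" "(z, z) \<in> sign_switches \<Delta> c0 d0"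
proof -
  obtain z where z: "z \<in> {p<..<q}" "\<Delta> z = 0" and left: "\<And>y. y \<in> {p..<z} \<Longrightarrow> \<Delta> y \<ge> 0"
    and right: "\<And>\<epsilon>. \<epsilon> > 0 \<Longrightarrow> \<exists>y. z < y \<and> y < z + \<epsilon> \<and> \<Delta> y < 0"
    using sign_change_point[OF cont less_imp_le[OF \<open>p < q\<close>] \<open>\<Delta> p > 0\<close> \<open>\<Delta> q < 0\<close>] by blast
  obtain \<delta>0 where "\<delta>0 > 0" and \<delta>0: "\<And>w. w \<noteq> z \<Longrightarrow> dist w z < \<delta>0 \<Longrightarrow> \<Delta> w \<noteq> 0"
    using iso[OF z] unfolding eventually_at by blast
  define \<delta> where "\<delta> = min (\<delta>0 / 2) (min (z - p) (q - z))"
  have "\<delta> > 0" "\<delta> < \<delta>0" "\<delta> \<le> z - p" "\<delta> \<le> q - z"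
    using \<open>\<delta>0 > 0\<close> z(1) unfolding \<delta>_def by auto
  have left_pos: "\<Delta> (z - x) > 0" if "x \<in> {0<..\<delta>}" for x
  proof -
    have "z - x \<in> {p..<z}" "z - x \<noteq> z" "dist (z - x) z < \<delta>0"
      using that \<open>\<delta> \<le> z - p\<close> \<open>\<delta> < \<delta>0\<close> by (auto simp: dist_real_def)
    then have "0 \<le> \<Delta> (z - x)" "\<Delta> (z - x) \<noteq> 0" using left \<delta>0 by auto
    then show ?thesis by simp
  qed
  have right_neg: "\<Delta> (z + x) < 0" if x: "x \<in> {0<..\<delta>}" for x
  proof (rule ccontr)
    assume "\<not> \<Delta> (z + x) < 0"
    moreover have "\<Delta> (z + x) \<noteq> 0"
      using \<delta>0[of "z + x"] x \<open>\<delta> < \<delta>0\<close> by (auto simp: dist_real_def)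
    ultimately have "\<Delta> (z + x) > 0" by simp
    obtain y where y: "z < y" "y < z + x" "\<Delta> y < 0" using right x by force
    have "continuous_on {y..z + x} \<Delta>"
      using continuous_on_subset[OF cont] y x z(1) \<open>\<delta> \<le> q - z\<close> by auto
    then obtain w where "y \<le> w" "w \<le> z + x" "\<Delta> w = 0"
      using IVT'[of \<Delta> y 0 "z + x"] y \<open>\<Delta> (z + x) > 0\<close> by auto
    then show False
      using \<delta>0[of w] y x \<open>\<delta> < \<delta>0\<close> by (auto simp: dist_real_def)
  qed
  have "(z, z) \<in> sign_switches \<Delta> c0 d0"
    using z \<open>\<delta> > 0\<close> \<open>\<delta> \<le> z - p\<close> \<open>\<delta> \<le> q - z\<close> \<open>c0 < p\<close> \<open>q < d0\<close> left_pos right_neg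
    by (intro sign_switch_pointI) (auto simp: mult_pos_neg)
  then show thesis using that z(1) by blast
qed

lemma sign_switch_between:
  fixes \<Delta> :: "real \<Rightarrow> real"
  assumes cont: "continuous_on {p..q} \<Delta>" and "c0 < p" "p < q" "q < d0" and "\<Delta> p * \<Delta> q < 0"
    and iso: "\<And>z. z \<in> {p<..<q} \<Longrightarrow> \<Delta> z = 0 \<Longrightarrow> \<forall>\<^sub>F w in at z. \<Delta> w \<noteq> 0"
  obtains z where "z \<in> {p<..<q}" "(z, z) \<in> sign_switches \<Delta> c0 d0"
proof -
  consider "\<Delta> p > 0" "\<Delta> q < 0" | "- \<Delta> p > 0" "- \<Delta> q < 0"
    using \<open>\<Delta> p * \<Delta> q < 0\<close> by (auto simp: mult_less_0_iff)
  then show thesis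
  proof cases
    case 1
    then show thesis using sign_switch_between_pos[OF cont assms(2-4) _ _ iso] that by blast
  next
    case 2
    have "continuous_on {p..q} (\<lambda>x. - \<Delta> x)" using cont by (intro continuous_intros)
    then obtain z where "z \<in> {p<..<q}" "(z, z) \<in> sign_switches (\<lambda>x. - \<Delta> x) c0 d0"
      by (rule sign_switch_between_pos) (use assms(2-4) 2 iso in auto)
    then show thesis using that by (simp add: sign_switches_uminus)
  qed
qed

lemma three_sign_switches_of_isolated_zeros:
  fixes \<Delta> :: "real \<Rightarrow> real"
  assumes cont: "continuous_on {c0<..<d0} \<Delta>"
    and iso: "\<And>z. z \<in> {c0<..<d0} \<Longrightarrow> \<Delta> z = 0 \<Longrightarrow> \<forall>\<^sub>F w in at z. \<Delta> w \<noteq> 0"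
    and pts: "c0 < p1" "p1 < p2" "p2 < p3" "p3 < p4" "p4 < d0"
    and alt: "\<Delta> p1 * \<Delta> p2 < 0" "\<Delta> p2 * \<Delta> p3 < 0" "\<Delta> p3 * \<Delta> p4 < 0"
  shows "3 \<le> num_sign_switches \<Delta> c0 d0"
proof -
  have switch: "\<exists>z\<in>{p<..<q}. (z, z) \<in> sign_switches \<Delta> c0 d0"
    if pq: "c0 < p" "p < q" "q < d0" "\<Delta> p * \<Delta> q < 0" for p q
  proof -
    have "continuous_on {p..q} \<Delta>"
      by (rule continuous_on_subset[OF cont]) (use pq in auto)
    then obtain z where "z \<in> {p<..<q}" "(z, z) \<in> sign_switches \<Delta> c0 d0"
      by (rule sign_switch_between[OF _ pq]) (use iso pq in auto)
    then show ?thesis by blast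
  qed
  obtain z1 where "z1 \<in> {p1<..<p2}" "(z1, z1) \<in> sign_switches \<Delta> c0 d0"
    using switch[OF _ _ _ alt(1)] pts by auto
  moreover obtain z2 where "z2 \<in> {p2<..<p3}" "(z2, z2) \<in> sign_switches \<Delta> c0 d0"
    using switch[OF _ _ _ alt(2)] pts by auto
  moreover obtain z3 where "z3 \<in> {p3<..<p4}" "(z3, z3) \<in> sign_switches \<Delta> c0 d0"
    using switch[OF _ _ _ alt(3)] pts by auto
  ultimately show ?thesis
    by (intro three_le_num_sign_switches[of z1 \<Delta> c0 d0 z2 z3]) auto
qed

lemma eventually_nhds_avoids_negligible:
  fixes x :: "'a::euclidean_space"
  assumes "negligible N" "eventually P (nhds x)"
  obtains y where "P y" "y \<notin> N"
proof -
  obtain S where "open S" "x \<in> S" "\<forall>y\<in>S. P y"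
    using assms(2) unfolding eventually_nhds by blast
  moreover have "\<not> S \<subseteq> N"
    using open_not_negligible[OF \<open>open S\<close>] \<open>x \<in> S\<close> negligible_subset[OF assms(1)] by blast
  ultimately show thesis using that by blast
qed

lemma three_sign_switches_near_level:
  fixes \<phi> \<psi> :: "real \<Rightarrow> real"
  assumes \<phi>: "convex_on {c0..d0} \<phi>" and \<psi>: "convex_on {c0..d0} \<psi>"
    and pos: "\<And>x. x \<in> {c0<..<d0} \<Longrightarrow> \<psi> x > 0"
    and pts: "c0 < p1" "p1 < p2" "p2 < p3" "p3 < p4" "p4 < d0"
    and "b0 > 0"
    and alt: "(\<phi> p1 - b0 * \<psi> p1) * (\<phi> p2 - b0 * \<psi> p2) < 0"
      "(\<phi> p2 - b0 * \<psi> p2) * (\<phi> p3 - b0 * \<psi> p3) < 0"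
      "(\<phi> p3 - b0 * \<psi> p3) * (\<phi> p4 - b0 * \<psi> p4) < 0"
  shows "\<exists>b>0. 3 \<le> num_sign_switches (\<lambda>x. \<phi> x - b * \<psi> x) c0 d0"
proof -
  define N where "N = accumulating_zero_levels \<phi> \<psi> at {c0<..<d0}"
  have "negligible N"
    unfolding N_def using \<phi> \<psi> pos by (rule negligible_accumulating_zero_levels)
  have persists: "\<forall>\<^sub>F b in nhds b0. (\<phi> x - b * \<psi> x) * (\<phi> y - b * \<psi> y) < 0"
    if "(\<phi> x - b0 * \<psi> x) * (\<phi> y - b0 * \<psi> y) < 0" for x y
    using that by (intro order_tendstoD(2)[of _ "(\<phi> x - b0 * \<psi> x) * (\<phi> y - b0 * \<psi> y)"])
      (auto intro!: tendsto_eq_intros filterlim_ident)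
  have "\<forall>\<^sub>F b in nhds b0. b > 0 \<and> (\<phi> p1 - b * \<psi> p1) * (\<phi> p2 - b * \<psi> p2) < 0
      \<and> (\<phi> p2 - b * \<psi> p2) * (\<phi> p3 - b * \<psi> p3) < 0 \<and> (\<phi> p3 - b * \<psi> p3) * (\<phi> p4 - b * \<psi> p4) < 0"
    using order_tendstoD(1)[OF filterlim_ident \<open>b0 > 0\<close>]
      persists[OF alt(1)] persists[OF alt(2)] persists[OF alt(3)]
    by (simp add: eventually_conj_iff)
  then obtain b where b: "b > 0 \<and> (\<phi> p1 - b * \<psi> p1) * (\<phi> p2 - b * \<psi> p2) < 0
      \<and> (\<phi> p2 - b * \<psi> p2) * (\<phi> p3 - b * \<psi> p3) < 0 \<and> (\<phi> p3 - b * \<psi> p3) * (\<phi> p4 - b * \<psi> p4) < 0"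
    and "b \<notin> N"
    by (rule eventually_nhds_avoids_negligible[OF \<open>negligible N\<close>])
  have "continuous_on {c0<..<d0} (\<lambda>x. \<phi> x - b * \<psi> x)"
    using \<phi> \<psi> by (intro continuous_intros convex_on_continuous) (auto intro: convex_on_subset)
  moreover have "\<forall>\<^sub>F w in at z. \<phi> w - b * \<psi> w \<noteq> 0"
    if "z \<in> {c0<..<d0}" "\<phi> z - b * \<psi> z = 0" for z
    using \<open>b \<notin> N\<close> that unfolding N_def accumulating_zero_levels_def by (auto simp: frequently_def)
  ultimately have "3 \<le> num_sign_switches (\<lambda>x. \<phi> x - b * \<psi> x) c0 d0"
    using pts b by (intro three_sign_switches_of_isolated_zeros) auto
  then show ?thesis using b by blast
qed

lemma tendsto_at_right_exceeds:
  fixes f :: "real \<Rightarrow> real"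
  assumes "(f \<longlongrightarrow> l) (at_right x)" "c < l" "x < b"
  obtains y where "x < y" "y < b" "c < f y"
proof -
  have "\<forall>\<^sub>F y in at_right x. c < f y" using assms(1,2) by (rule order_tendstoD(1))
  moreover have "\<forall>\<^sub>F y in at_right x. x < y \<and> y < b"
    using \<open>x < b\<close> unfolding eventually_at_right_field by auto
  ultimately have "\<forall>\<^sub>F y in at_right x. c < f y \<and> x < y \<and> y < b" by (rule eventually_conj)
  then show thesis using that eventually_happens by force
qed

lemma tendsto_at_left_exceeds:
  fixes f :: "real \<Rightarrow> real"
  assumes "(f \<longlongrightarrow> l) (at_left x)" "c < l" "b < x"
  obtains y where "b < y" "y < x" "c < f y"
proof -
  have "\<forall>\<^sub>F y in at_left x. c < f y" using assms(1,2) by (rule order_tendstoD(1))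
  moreover have "\<forall>\<^sub>F y in at_left x. b < y \<and> y < x"
    using \<open>b < x\<close> unfolding eventually_at_left_field by auto
  ultimately have "\<forall>\<^sub>F y in at_left x. c < f y \<and> b < y \<and> y < x" by (rule eventually_conj)
  then show thesis using that eventually_happens by force
qed

lemma three_sign_changes_among_six:
  fixes \<Delta> :: "real \<Rightarrow> real"
  assumes "x0 < x1" "x1 < x2" "x2 < x3" "x3 < x4" "x4 < x5"
    and s: "\<Delta> x1 * \<Delta> x2 < 0" "\<Delta> x3 * \<Delta> x4 < 0" "\<Delta> x0 * \<Delta> x5 < 0"
  obtains p1 p2 p3 p4 where "x0 \<le> p1" "p1 < p2" "p2 < p3" "p3 < p4" "p4 \<le> x5"
    "\<Delta> p1 * \<Delta> p2 < 0" "\<Delta> p2 * \<Delta> p3 < 0" "\<Delta> p3 * \<Delta> p4 < 0"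
proof -
  consider "\<Delta> x2 * \<Delta> x3 < 0" | "\<Delta> x2 * \<Delta> x4 < 0" "\<Delta> x0 * \<Delta> x1 < 0"
    | "\<Delta> x2 * \<Delta> x4 < 0" "\<Delta> x4 * \<Delta> x5 < 0"
    using s by (auto simp: mult_less_0_iff zero_less_mult_iff)
  then show thesis
  proof cases
    case 1
    then show thesis using that[of x1 x2 x3 x4] assms by simp
  next
    case 2
    then show thesis using that[of x0 x1 x2 x4] assms by (simp add: mult.commute)
  next
    case 3
    then show thesis using that[of x1 x2 x4 x5] assms by simp
  qed
qed

lemma alternating_points_of_two_sign_switches:
  fixes \<Delta> :: "real \<Rightarrow> real"
  assumes cont: "continuous_on {c0..d0} \<Delta>" and ends: "\<Delta> c0 * \<Delta> d0 < 0"
    and s1: "(c1, d1) \<in> sign_switches \<Delta> c0 d0" and s2: "(c2, d2) \<in> sign_switches \<Delta> c0 d0"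
    and "d1 < c2"
  obtains p1 p2 p3 p4 where "c0 < p1" "p1 < p2" "p2 < p3" "p3 < p4" "p4 < d0"
    "\<Delta> p1 * \<Delta> p2 < 0" "\<Delta> p2 * \<Delta> p3 < 0" "\<Delta> p3 * \<Delta> p4 < 0"
proof -
  obtain \<delta>1 where "\<delta>1 > 0" "\<delta>1 \<le> c1 - c0" and \<delta>1: "\<forall>x\<in>{0<..\<delta>1}. \<Delta> (c1 - x) * \<Delta> (d1 + x) < 0"
    using sign_switchesD(5)[OF s1] by blast
  obtain \<delta>2 where "\<delta>2 > 0" "\<delta>2 \<le> d0 - d2" and \<delta>2: "\<forall>x\<in>{0<..\<delta>2}. \<Delta> (c2 - x) * \<Delta> (d2 + x) < 0"
    using sign_switchesD(5)[OF s2] by blast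
  define m where "m = min (min \<delta>1 \<delta>2) ((c2 - d1) / 3)"
  have "0 < m" "m \<le> \<delta>1" "m \<le> \<delta>2"
    using \<open>\<delta>1 > 0\<close> \<open>\<delta>2 > 0\<close> \<open>d1 < c2\<close> unfolding m_def by auto
  have "m \<le> (c2 - d1) / 3" unfolding m_def by (rule min.cobounded2)
  define x where "x = m / 2"
  have x: "x \<in> {0<..\<delta>1}" "x \<in> {0<..\<delta>2}" "c0 < c1 - x" "d1 + x < c2 - x" "d2 + x < d0"
    using \<open>0 < m\<close> \<open>m \<le> \<delta>1\<close> \<open>m \<le> \<delta>2\<close> \<open>m \<le> (c2 - d1) / 3\<close> \<open>\<delta>1 \<le> c1 - c0\<close> \<open>\<delta>2 \<le> d0 - d2\<close>
    unfolding x_def by auto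
  have "c1 \<le> d1" "c2 \<le> d2" "c0 < d0"
    using sign_switchesD[OF s1] sign_switchesD[OF s2] by auto
  have "((\<lambda>y. \<Delta> y * \<Delta> c0) \<longlongrightarrow> \<Delta> c0 * \<Delta> c0) (at_right c0)"
    using continuous_on_Icc_at_rightD[OF cont \<open>c0 < d0\<close>] by (intro tendsto_intros)
  moreover have "0 < \<Delta> c0 * \<Delta> c0" using ends by (auto simp: zero_less_mult_iff mult_less_0_iff)
  ultimately obtain q0 where q0: "c0 < q0" "q0 < c1 - x" "0 < \<Delta> q0 * \<Delta> c0"
    using x(3) by (rule tendsto_at_right_exceeds)
  have "((\<lambda>y. \<Delta> y * \<Delta> d0) \<longlongrightarrow> \<Delta> d0 * \<Delta> d0) (at_left d0)"
    using continuous_on_Icc_at_leftD[OF cont \<open>c0 < d0\<close>] by (intro tendsto_intros)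
  moreover have "0 < \<Delta> d0 * \<Delta> d0" using ends by (auto simp: zero_less_mult_iff mult_less_0_iff)
  ultimately obtain q5 where q5: "d2 + x < q5" "q5 < d0" "0 < \<Delta> q5 * \<Delta> d0"
    using x(5) by (rule tendsto_at_left_exceeds)
  have ends_near: "\<Delta> q0 * \<Delta> q5 < 0"
    using q0(3) q5(3) ends by (auto simp: mult_less_0_iff zero_less_mult_iff)
  have switch_near: "\<Delta> (c1 - x) * \<Delta> (d1 + x) < 0" "\<Delta> (c2 - x) * \<Delta> (d2 + x) < 0"
    using \<delta>1 \<delta>2 x(1,2) by auto
  have order: "q0 < c1 - x" "c1 - x < d1 + x" "d1 + x < c2 - x" "c2 - x < d2 + x" "d2 + x < q5"
    using q0(2) x \<open>c1 \<le> d1\<close> \<open>c2 \<le> d2\<close> q5(1) by auto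
  obtain p1 p2 p3 p4 where "q0 \<le> p1" "p1 < p2" "p2 < p3" "p3 < p4" "p4 \<le> q5"
    "\<Delta> p1 * \<Delta> p2 < 0" "\<Delta> p2 * \<Delta> p3 < 0" "\<Delta> p3 * \<Delta> p4 < 0"
    by (rule three_sign_changes_among_six[OF order switch_near ends_near])
  moreover have "c0 < p1" "p4 < d0" using \<open>q0 \<le> p1\<close> \<open>p4 \<le> q5\<close> q0(1) q5(2) by auto
  ultimately show thesis using that by blast
qed

section \<open>The class D-breve and the stride\<close>

lemma DbreveD:
  assumes "f \<in> Dbreve"
  shows "continuous_on {0..1} f" "convex_on {0..1} f"
    and "\<And>x y. x \<in> {0..1} \<Longrightarrow> y \<in> {0..1} \<Longrightarrow> x < y \<Longrightarrow> f y < f x"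
    and "\<And>x. x \<in> {0..1} \<Longrightarrow> 0 \<le> f x" "\<And>x. x \<in> {0..1} \<Longrightarrow> f x \<le> 1"
    and "f 0 = 1" "f 1 = 0"
  using assms unfolding Dbreve_def by (auto simp: image_subset_iff)

lemma Dbreve_pos: "f \<in> Dbreve \<Longrightarrow> 0 \<le> x \<Longrightarrow> x < 1 \<Longrightarrow> f x > 0"
  using DbreveD(3)[of f x 1] DbreveD(7)[of f] by auto

lemma Dbreve_antimono: "f \<in> Dbreve \<Longrightarrow> 0 \<le> x \<Longrightarrow> x \<le> y \<Longrightarrow> y \<le> 1 \<Longrightarrow> f y \<le> f x"
  using DbreveD(3)[of f x y] by (cases "x = y") auto

lemma Dbreve_rescaled:
  assumes "f \<in> Dbreve" "a > 0"
  shows "continuous_on {0..1/a} (\<lambda>x. f (a * x))" "convex_on {0..1/a} (\<lambda>x. f (a * x))"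
proof -
  have scale: "(\<lambda>x. a * x) -` {0..1} = {0..1/a}"
    using \<open>a > 0\<close> by (auto simp: field_simps zero_le_mult_iff)
  show "convex_on {0..1/a} (\<lambda>x. f (a * x))"
    using convex_on_compose_scale[OF DbreveD(2)[OF assms(1)], of a] by (simp only: scale)
  have "(\<lambda>x. a * x) ` {0..1/a} \<subseteq> {0..1}" using scale by auto
  then show "continuous_on {0..1/a} (\<lambda>x. f (a * x))"
    by (intro continuous_on_compose2[OF DbreveD(1)[OF assms(1)]] continuous_intros)
qed

lemma stride_greatest:
  assumes "f 1 = 0"
  shows "0 \<le> stride f" "\<And>x. x \<in> {0..1} \<Longrightarrow> stride f - x \<le> stride f * f x"
    and "\<And>\<alpha>. \<alpha> \<ge> 0 \<Longrightarrow> (\<forall>x\<in>{0..1}. \<alpha> - x \<le> \<alpha> * f x) \<Longrightarrow> \<alpha> \<le> stride f"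
proof -
  define A where "A = {\<alpha>::real. \<alpha> \<ge> 0 \<and> (\<forall>x\<in>{0..1}. \<alpha> - x \<le> \<alpha> * f x)}"
  have stride_A: "stride f = Sup A" unfolding stride_def A_def ..
  have "0 \<in> A" unfolding A_def by auto
  have "\<alpha> \<le> 1" if "\<alpha> \<in> A" for \<alpha>
  proof -
    have "\<alpha> - 1 \<le> \<alpha> * f 1" using that unfolding A_def by auto
    then show ?thesis using assms by simp
  qed
  then have "bdd_above A" by (rule bdd_aboveI)
  show upper: "\<alpha> \<le> stride f" if "\<alpha> \<ge> 0" "\<forall>x\<in>{0..1}. \<alpha> - x \<le> \<alpha> * f x" for \<alpha>
    unfolding stride_A using \<open>bdd_above A\<close> that by (intro cSup_upper) (auto simp: A_def)
  show "0 \<le> stride f" by (rule upper) auto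
  show "stride f - x \<le> stride f * f x" if "x \<in> {0..1}" for x
  proof (cases "f x < 1")
    case True
    have "\<alpha> \<le> x / (1 - f x)" if "\<alpha> \<in> A" for \<alpha>
      using that \<open>x \<in> {0..1}\<close> True by (auto simp: A_def pos_le_divide_eq algebra_simps)
    then have "stride f \<le> x / (1 - f x)"
      unfolding stride_A using \<open>0 \<in> A\<close> by (intro cSup_least) auto
    then show ?thesis using True by (simp add: pos_le_divide_eq algebra_simps)
  next
    case False
    then have "stride f * (1 - f x) \<le> 0"
      using \<open>0 \<le> stride f\<close> by (simp add: mult_nonneg_nonpos)
    then show ?thesis using that by (simp add: algebra_simps)
  qed
qed

lemma stride_mono:
  assumes "f 1 = 0" "g 1 = 0" and le: "\<forall>x\<in>{0..1}. g x \<le> f x"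
  shows "stride g \<le> stride f"
proof (rule stride_greatest(3)[of f, OF assms(1) stride_greatest(1)[of g, OF assms(2)]], intro ballI)
  fix x :: real assume "x \<in> {0..1}"
  have "stride g - x \<le> stride g * g x" using stride_greatest(2)[of g, OF assms(2) \<open>x \<in> {0..1}\<close>] .
  also have "\<dots> \<le> stride g * f x"
    using le \<open>x \<in> {0..1}\<close> stride_greatest(1)[of g, OF assms(2)] by (simp add: mult_left_mono)
  finally show "stride g - x \<le> stride g * f x" .
qed

lemma stride_exceeded_near_zero:
  assumes f: "convex_on {0..1} f" "f 0 = 1" "f 1 = 0" and "stride f < \<alpha>" "\<epsilon> > 0"
  obtains x where "0 < x" "x \<le> \<epsilon>" "x < \<alpha> * (1 - f x)"
proof -
  have "\<alpha> > 0" using \<open>stride f < \<alpha>\<close> stride_greatest(1)[of f, OF f(3)] by simp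
  then obtain x1 where "x1 \<in> {0..1}" "\<alpha> * f x1 < \<alpha> - x1"
    using stride_greatest(3)[of f, OF f(3), of \<alpha>] \<open>stride f < \<alpha>\<close> by force
  then have "x1 < \<alpha> * (1 - f x1)" by (simp add: algebra_simps)
  have "0 < x1" using \<open>\<alpha> * f x1 < \<alpha> - x1\<close> \<open>x1 \<in> {0..1}\<close> f(2) by (cases "x1 = 0") auto
  define x where "x = min x1 \<epsilon>"
  have "0 < x" "x \<le> x1" "x \<le> \<epsilon>" using \<open>0 < x1\<close> \<open>\<epsilon> > 0\<close> by (auto simp: x_def)
  have slope: "(1 - f x1) / x1 \<le> (1 - f x) / x"
  proof (cases "x = x1")
    case False
    then have "(f 0 - f x) / (0 - x) \<le> (f 0 - f x1) / (0 - x1)"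
      using convex_on_slope_le(1)[OF f(1), of 0 x1 x] \<open>0 < x\<close> \<open>x \<le> x1\<close> \<open>x1 \<in> {0..1}\<close> by simp
    then show ?thesis using f(2) by simp
  qed simp
  have "x = x1 * (x / x1)" using \<open>0 < x1\<close> by simp
  also have "\<dots> < \<alpha> * (1 - f x1) * (x / x1)"
    using \<open>x1 < \<alpha> * (1 - f x1)\<close> \<open>0 < x\<close> \<open>0 < x1\<close> by (intro mult_strict_right_mono) auto
  also have "\<dots> = \<alpha> * ((1 - f x1) / x1) * x" by simp
  also have "\<dots> \<le> \<alpha> * ((1 - f x) / x) * x"
    using slope \<open>\<alpha> > 0\<close> \<open>0 < x\<close> by (intro mult_left_mono mult_right_mono) auto
  also have "\<dots> = \<alpha> * (1 - f x)" using \<open>0 < x\<close> by simp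
  finally show thesis using that \<open>0 < x\<close> \<open>x \<le> \<epsilon>\<close> by blast
qed

section \<open>Crossing numbers\<close>

lemma num_sign_switches_le_crossing_number:
  assumes "a > 0" "b > 0"
  shows "num_sign_switches (\<lambda>x. f (a * x) - b * g x) 0 (min 1 (1 / a)) \<le> crossing_number f g"
  unfolding crossing_number_def using assms
  by (intro SUP_upper2[of a] SUP_upper) auto

lemma crossing_number_attained:
  assumes "enat n \<le> crossing_number f g" "n > 0"
  obtains a b where "a > 0" "b > 0"
    "enat n \<le> num_sign_switches (\<lambda>x. f (a * x) - b * g x) 0 (min 1 (1 / a))"
proof -
  obtain m where "n = Suc m" using \<open>n > 0\<close> gr0_implies_Suc by blast
  have "\<exists>a>0. \<exists>b>0. enat n \<le> num_sign_switches (\<lambda>x. f (a * x) - b * g x) 0 (min 1 (1 / a))"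
  proof (rule ccontr)
    assume none: "\<not> ?thesis"
    have le: "num_sign_switches (\<lambda>x. f (a * x) - b * g x) 0 (min 1 (1 / a)) \<le> enat m"
      if "a > 0" "b > 0" for a b
      using none that unfolding \<open>n = Suc m\<close> by (metis Suc_ile_eq not_less)
    then have "crossing_number f g \<le> enat m"
      unfolding crossing_number_def by (intro SUP_least) simp
    then show False using assms(1) \<open>n = Suc m\<close> by (simp add: Suc_ile_eq)
  qed
  then show thesis using that by blast
qed

lemma three_le_crossing_number:
  assumes f: "f \<in> Dbreve" and g: "g \<in> Dbreve" and "a > 0" "b > 0"
    and pts: "0 < p1" "p1 < p2" "p2 < p3" "p3 < p4" "p4 < min 1 (1 / a)"
    and alt: "(f (a * p1) - b * g p1) * (f (a * p2) - b * g p2) < 0"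
      "(f (a * p2) - b * g p2) * (f (a * p3) - b * g p3) < 0"
      "(f (a * p3) - b * g p3) * (f (a * p4) - b * g p4) < 0"
  shows "3 \<le> crossing_number f g"
proof -
  have "convex_on {0..min 1 (1 / a)} (\<lambda>x. f (a * x))"
    by (rule convex_on_subset[OF Dbreve_rescaled(2)[OF f \<open>a > 0\<close>]]) auto
  moreover have "convex_on {0..min 1 (1 / a)} g"
    by (rule convex_on_subset[OF DbreveD(2)[OF g]]) auto
  moreover have "g x > 0" if "x \<in> {0<..<min 1 (1 / a)}" for x
    using Dbreve_pos[OF g] that by auto
  ultimately obtain b' where "b' > 0" "3 \<le> num_sign_switches (\<lambda>x. f (a * x) - b' * g x) 0 (min 1 (1 / a))"
    using three_sign_switches_near_level[OF _ _ _ pts \<open>b > 0\<close> alt] by blast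
  then show ?thesis
    using num_sign_switches_le_crossing_number[OF \<open>a > 0\<close> \<open>b' > 0\<close>, of f g] by (meson order_trans)
qed

lemma obtain_level_below_1:
  fixes \<phi> \<psi> :: "real \<Rightarrow> real"
  assumes "\<phi> x2 < \<psi> x2" "\<psi> x3 < \<phi> x3" "\<phi> x4 < \<psi> x4"
  obtains b where "0 < b" "b < 1"
    "\<phi> x2 - b * \<psi> x2 < 0" "0 < \<phi> x3 - b * \<psi> x3" "\<phi> x4 - b * \<psi> x4 < 0"
proof -
  have lim: "((\<lambda>b. \<phi> x - b * \<psi> x) \<longlongrightarrow> \<phi> x - \<psi> x) (at_left 1)" for x
    by (auto intro!: tendsto_eq_intros)
  have "\<forall>\<^sub>F b in at_left (1::real). 0 < b \<and> b < 1"
    unfolding eventually_at_left_field by (intro exI[of _ 0]) auto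
  moreover have "\<forall>\<^sub>F b in at_left 1. \<phi> x2 - b * \<psi> x2 < 0 \<and> 0 < \<phi> x3 - b * \<psi> x3
      \<and> \<phi> x4 - b * \<psi> x4 < 0"
    using order_tendstoD(2)[OF lim, of x2 0] order_tendstoD(1)[OF lim, of 0 x3]
      order_tendstoD(2)[OF lim, of x4 0] assms
    by (simp add: eventually_conj_iff)
  ultimately have "\<forall>\<^sub>F b in at_left 1. (0 < b \<and> b < 1) \<and> \<phi> x2 - b * \<psi> x2 < 0
      \<and> 0 < \<phi> x3 - b * \<psi> x3 \<and> \<phi> x4 - b * \<psi> x4 < 0"
    by (rule eventually_conj)
  then show thesis using that eventually_happens by force
qed

lemma three_le_crossing_number_if_below_above:
  fixes f g :: "real \<Rightarrow> real"
  assumes f: "f \<in> Dbreve" and g: "g \<in> Dbreve" and "a > 1"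
    and "0 < p2" "p2 < p3" "p3 < 1 / a"
    and below: "f (a * p2) < g p2" and above: "g p3 < f (a * p3)"
  shows "3 \<le> crossing_number f g"
proof -
  have "a > 0" "0 < 1 / a" "1 / a < 1" "min 1 (1 / a) = 1 / a" using \<open>a > 1\<close> by auto
  have cont_f: "continuous_on {0..1/a} (\<lambda>x. f (a * x))"
    using Dbreve_rescaled(1)[OF f \<open>a > 0\<close>] .
  have cont_g: "continuous_on {0..1/a} g"
    by (rule continuous_on_subset[OF DbreveD(1)[OF g]]) (use \<open>1 / a < 1\<close> in auto)
  have "((\<lambda>x. g x - f (a * x)) \<longlongrightarrow> g (1 / a) - f (a * (1 / a))) (at_left (1 / a))"
    using cont_f cont_g \<open>0 < 1 / a\<close> by (intro continuous_on_Icc_at_leftD continuous_intros)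
  moreover have "0 < g (1 / a) - f (a * (1 / a))"
    using DbreveD(7)[OF f] Dbreve_pos[OF g, of "1 / a"] \<open>a > 0\<close> \<open>1 / a < 1\<close> by simp
  ultimately obtain p4 where "p3 < p4" "p4 < 1 / a" "0 < g p4 - f (a * p4)"
    using \<open>p3 < 1 / a\<close> by (rule tendsto_at_left_exceeds)
  obtain b where "0 < b" "b < 1" and signs: "f (a * p2) - b * g p2 < 0"
      "0 < f (a * p3) - b * g p3" "f (a * p4) - b * g p4 < 0"
    using below above \<open>0 < g p4 - f (a * p4)\<close>[simplified]
    by (rule obtain_level_below_1[where \<phi> = "\<lambda>x. f (a * x)" and \<psi> = g])
  have "((\<lambda>x. f (a * x) - b * g x) \<longlongrightarrow> f (a * 0) - b * g 0) (at_right 0)"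
    using cont_f cont_g \<open>0 < 1 / a\<close>
    by (intro continuous_on_Icc_at_rightD[of 0 "1 / a"] continuous_intros)
  moreover have "0 < f (a * 0) - b * g 0" using DbreveD(6)[OF f] DbreveD(6)[OF g] \<open>b < 1\<close> by simp
  ultimately obtain p1 where "0 < p1" "p1 < p2" and above1: "0 < f (a * p1) - b * g p1"
    using \<open>0 < p2\<close> by (rule tendsto_at_right_exceeds)
  show ?thesis
  proof (rule three_le_crossing_number[OF f g \<open>a > 0\<close> \<open>b > 0\<close>])
    show "0 < p1" "p1 < p2" "p2 < p3" "p3 < p4" "p4 < min 1 (1 / a)"
      using \<open>0 < p1\<close> \<open>p1 < p2\<close> \<open>p2 < p3\<close> \<open>p3 < p4\<close> \<open>p4 < 1 / a\<close> \<open>min 1 (1 / a) = 1 / a\<close> by auto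
    show "(f (a * p1) - b * g p1) * (f (a * p2) - b * g p2) < 0"
      using above1 signs(1) by (rule mult_pos_neg)
    show "(f (a * p2) - b * g p2) * (f (a * p3) - b * g p3) < 0"
      using signs(1,2) by (rule mult_neg_pos)
    show "(f (a * p3) - b * g p3) * (f (a * p4) - b * g p4) < 0"
      using signs(2,3) by (rule mult_pos_neg)
  qed
qed

lemma self_rescaled_difference_nonpos:
  assumes f: "f \<in> Dbreve" and "1 \<le> a" "1 \<le> b" "y \<in> {0..1 / a}"
  shows "f (a * y) - b * f y \<le> 0"
proof -
  have "y \<le> a * y" using mult_right_mono[of 1 a y] assms(2,4) by simp
  moreover have "a * y \<le> 1" using assms(2,4) by (auto simp: field_simps)
  ultimately have "f (a * y) \<le> f y" using Dbreve_antimono[OF f] assms(4) by auto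
  also have "\<dots> \<le> b * f y"
    using mult_right_mono[of 1 b "f y"] DbreveD(4)[OF f, of y] assms(2-4) \<open>a * y \<le> 1\<close> \<open>y \<le> a * y\<close>
    by simp
  finally show ?thesis by simp
qed

lemma self_rescaled_difference_nonneg:
  assumes f: "f \<in> Dbreve" and "0 < a" "a \<le> 1" "b \<le> 1" "y \<in> {0..1}"
  shows "f (a * y) - b * f y \<ge> 0"
proof -
  have "a * y \<le> y" using mult_right_mono[of a 1 y] assms(3,5) by simp
  then have "f y \<le> f (a * y)" using Dbreve_antimono[OF f] assms(2,5) by auto
  moreover have "b * f y \<le> f y" using mult_right_mono[of b 1 "f y"] DbreveD(4)[OF f] assms(4,5) by simp
  ultimately show ?thesis by simp
qed

lemma self_rescaled_difference_endpoints:
  fixes f :: "real \<Rightarrow> real"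
  assumes f: "f \<in> Dbreve" and "a > 0" "b > 0"
    and uv: "u \<in> {0..min 1 (1 / a)}" "v \<in> {0..min 1 (1 / a)}"
    and sign: "(f (a * u) - b * f u) * (f (a * v) - b * f v) < 0"
  shows "(f (a * 0) - b * f 0) * (f (a * min 1 (1 / a)) - b * f (min 1 (1 / a))) < 0"
proof -
  have "f (a * 0) - b * f 0 = 1 - b" using DbreveD(6)[OF f] by simp
  have "\<not> (1 \<le> a \<and> 1 \<le> b)"
  proof
    assume "1 \<le> a \<and> 1 \<le> b"
    then have "f (a * u) - b * f u \<le> 0" "f (a * v) - b * f v \<le> 0"
      using self_rescaled_difference_nonpos[OF f] uv by auto
    then show False using mult_nonpos_nonpos sign by fastforce
  qed
  moreover have "\<not> (a \<le> 1 \<and> b \<le> 1)"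
  proof
    assume "a \<le> 1 \<and> b \<le> 1"
    then have "f (a * u) - b * f u \<ge> 0" "f (a * v) - b * f v \<ge> 0"
      using self_rescaled_difference_nonneg[OF f \<open>a > 0\<close>] uv by auto
    then show False using mult_nonneg_nonneg sign by fastforce
  qed
  ultimately consider "1 < a" "b < 1" | "a < 1" "1 < b" by linarith
  then show ?thesis
  proof cases
    case 1
    then have "f (a * min 1 (1 / a)) - b * f (min 1 (1 / a)) = - b * f (1 / a)"
      using DbreveD(7)[OF f] by simp
    moreover have "f (1 / a) > 0" using Dbreve_pos[OF f] 1 by simp
    ultimately show ?thesis
      using \<open>f (a * 0) - b * f 0 = 1 - b\<close> 1 \<open>b > 0\<close> by (simp add: mult_pos_neg)
  next
    case 2
    then have "f (a * min 1 (1 / a)) - b * f (min 1 (1 / a)) = f a"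
      using DbreveD(7)[OF f] \<open>a > 0\<close> by simp
    moreover have "f a > 0" using Dbreve_pos[OF f] 2 \<open>a > 0\<close> by simp
    ultimately show ?thesis
      using \<open>f (a * 0) - b * f 0 = 1 - b\<close> 2 by (simp add: mult_neg_pos)
  qed
qed

lemma crossing_number_ne_2_if_eq:
  fixes f g :: "real \<Rightarrow> real"
  assumes f: "f \<in> Dbreve" and g: "g \<in> Dbreve" and eq: "\<forall>x\<in>{0..1}. f x = g x"
  shows "crossing_number f g \<noteq> 2"
proof
  assume cn: "crossing_number f g = 2"
  then have "enat 2 \<le> crossing_number f g" by (simp add: numeral_eq_enat)
  then obtain a b where "a > 0" "b > 0"
    and two: "enat 2 \<le> num_sign_switches (\<lambda>x. f (a * x) - b * g x) 0 (min 1 (1 / a))"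
    by (rule crossing_number_attained) simp
  define D where "D = min 1 (1 / a)"
  define \<Delta> where "\<Delta> x = f (a * x) - b * g x" for x
  have \<Delta>_self: "\<Delta> x = f (a * x) - b * f x" if "x \<in> {0..D}" for x
    using eq that unfolding \<Delta>_def D_def by auto
  obtain c1 d1 c2 d2 where s1: "(c1, d1) \<in> sign_switches \<Delta> 0 D"
    and s2: "(c2, d2) \<in> sign_switches \<Delta> 0 D" and "d1 < c2"
    using two unfolding \<Delta>_def D_def by (rule obtain_ordered_sign_switches)
  obtain \<delta> where "\<delta> > 0" "\<delta> \<le> c1" "\<delta> \<le> D - d1" "\<Delta> (c1 - \<delta>) * \<Delta> (d1 + \<delta>) < 0"
    using sign_switchesD(5)[OF s1] by auto
  moreover have "c1 - \<delta> \<in> {0..D}" "d1 + \<delta> \<in> {0..D}" "0 \<in> {0..D}" "D \<in> {0..D}"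
    using \<open>\<delta> \<le> c1\<close> \<open>\<delta> \<le> D - d1\<close> \<open>\<delta> > 0\<close> sign_switchesD(2)[OF s1] \<open>a > 0\<close>
    by (auto simp: D_def)
  ultimately have "\<Delta> 0 * \<Delta> D < 0"
    using self_rescaled_difference_endpoints[OF f \<open>a > 0\<close> \<open>b > 0\<close>, of "c1 - \<delta>" "d1 + \<delta>"]
    by (simp add: \<Delta>_self D_def)
  moreover have "continuous_on {0..D} \<Delta>"
  proof -
    have "continuous_on {0..D} (\<lambda>x. f (a * x))"
      by (rule continuous_on_subset[OF Dbreve_rescaled(1)[OF f \<open>a > 0\<close>]]) (auto simp: D_def)
    moreover have "continuous_on {0..D} g"
      by (rule continuous_on_subset[OF DbreveD(1)[OF g]]) (auto simp: D_def)
    ultimately show ?thesis unfolding \<Delta>_def by (intro continuous_intros)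
  qed
  ultimately obtain p1 p2 p3 p4 where "0 < p1" "p1 < p2" "p2 < p3" "p3 < p4" "p4 < D"
    "\<Delta> p1 * \<Delta> p2 < 0" "\<Delta> p2 * \<Delta> p3 < 0" "\<Delta> p3 * \<Delta> p4 < 0"
    using alternating_points_of_two_sign_switches[OF _ _ s1 s2 \<open>d1 < c2\<close>] by blast
  then have "3 \<le> crossing_number f g"
    unfolding \<Delta>_def D_def by (intro three_le_crossing_number[OF f g \<open>a > 0\<close> \<open>b > 0\<close>])
  then show False using cn by (simp add: numeral_eq_enat)
qed

section \<open>The stride lemma\<close>

lemma rescaled_below_near_zero:
  assumes f: "f \<in> Dbreve" and g: "g \<in> Dbreve" and "stride g > 0"
    and "stride f < a * stride g" "\<epsilon> > 0"
  obtains p where "0 < p" "p \<le> \<epsilon>" "f (a * p) < g p"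
proof -
  have "0 < a * stride g"
    using \<open>stride f < a * stride g\<close> stride_greatest(1)[of f, OF DbreveD(7)[OF f]] by simp
  then have "a > 0" using \<open>stride g > 0\<close> by (simp add: zero_less_mult_iff)
  define m where "m = min \<epsilon> 1"
  have "0 < m" "m \<le> \<epsilon>" "m \<le> 1" using \<open>\<epsilon> > 0\<close> by (auto simp: m_def)
  then have "a * m > 0" using \<open>a > 0\<close> by simp
  with \<open>stride f < a * stride g\<close>
  obtain x where "0 < x" "x \<le> a * m" and x: "x < a * stride g * (1 - f x)"
    by (rule stride_exceeded_near_zero[OF DbreveD(2)[OF f] DbreveD(6)[OF f] DbreveD(7)[OF f]])
  define p where "p = x / a"
  have "0 < p" "p \<le> m" "a * p = x"
    using \<open>0 < x\<close> \<open>x \<le> a * m\<close> \<open>a > 0\<close> by (auto simp: p_def pos_divide_le_eq mult.commute)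
  then have "p \<le> \<epsilon>" "p \<le> 1" using \<open>m \<le> \<epsilon>\<close> \<open>m \<le> 1\<close> by auto
  have "f (a * p) < 1 - p / stride g"
    using x \<open>a * p = x\<close> \<open>a > 0\<close> \<open>stride g > 0\<close> by (simp add: p_def field_simps)
  also have "\<dots> \<le> g p"
    using stride_greatest(2)[of g, OF DbreveD(7)[OF g], of p] \<open>0 < p\<close> \<open>p \<le> 1\<close> \<open>stride g > 0\<close>
    by (simp add: field_simps)
  finally show thesis using that \<open>0 < p\<close> \<open>p \<le> \<epsilon>\<close> by blast
qed

lemma stride_rescaled_le:
  fixes f g :: "real \<Rightarrow> real"
  assumes f: "f \<in> Dbreve" and g: "g \<in> Dbreve" and dom: "dominated g f" and "stride g > 0"
  shows "\<forall>x\<in>{0..1 / stride f}. f (stride f * x) \<le> g (stride g * x)"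
proof (rule ccontr)
  assume "\<not> ?thesis"
  then obtain x0 where x0: "x0 \<in> {0..1 / stride f}" and bad: "g (stride g * x0) < f (stride f * x0)"
    by (auto simp: not_le)
  define s0 where "s0 = stride f * x0"
  define t0 where "t0 = stride g * x0"
  have "stride g \<le> stride f"
    using dom DbreveD(7)[OF f] DbreveD(7)[OF g] by (intro stride_mono) (auto simp: dominated_def)
  then have "stride f > 0" using \<open>stride g > 0\<close> by simp
  have "x0 \<noteq> 0" using bad DbreveD(6)[OF f] DbreveD(6)[OF g] by auto
  then have "x0 > 0" using x0 by simp
  have "0 < t0" "t0 \<le> s0" "s0 \<le> 1"
    using x0 \<open>x0 > 0\<close> \<open>stride g > 0\<close> \<open>stride g \<le> stride f\<close>
    unfolding s0_def t0_def by (auto simp: field_simps mult_right_mono)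
  have "s0 < 1"
    using bad DbreveD(4)[OF g, of t0] DbreveD(7)[OF f] \<open>0 < t0\<close> \<open>t0 \<le> s0\<close> \<open>s0 \<le> 1\<close>
    unfolding s0_def[symmetric] t0_def[symmetric] by (cases "s0 = 1") auto
  have "(f \<longlongrightarrow> f s0) (at_right s0)"
    using continuous_on_subset[OF DbreveD(1)[OF f], of "{s0..1}"] \<open>0 < t0\<close> \<open>t0 \<le> s0\<close> \<open>s0 < 1\<close>
    by (intro continuous_on_Icc_at_rightD) auto
  then obtain s1 where "s0 < s1" "s1 < 1" "g t0 < f s1"
    using bad \<open>s0 < 1\<close> unfolding s0_def[symmetric] t0_def[symmetric] by (rule tendsto_at_right_exceeds)
  text \<open>With \<open>a = s1 / t0\<close>, \<open>f(a x)\<close> exceeds \<open>g\<close> at \<open>t0\<close>, while \<open>a \<sigma>(g) > \<sigma>(f)\<close> makes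
    \<open>f(a x)\<close> dip below \<open>g\<close> near 0.\<close>
  define a where "a = s1 / t0"
  have "a * t0 = s1" "a > 1" using \<open>0 < t0\<close> \<open>t0 \<le> s0\<close> \<open>s0 < s1\<close> by (auto simp: a_def)
  have "t0 < 1 / a" using \<open>a * t0 = s1\<close> \<open>s1 < 1\<close> \<open>a > 1\<close> by (simp add: field_simps)
  have "stride f < a * stride g"
    using \<open>s0 < s1\<close> \<open>x0 > 0\<close> \<open>0 < t0\<close> \<open>stride g > 0\<close>
    unfolding a_def s0_def t0_def by (simp add: field_simps)
  then obtain p2 where "0 < p2" "p2 \<le> t0 / 2" "f (a * p2) < g p2"
    by (rule rescaled_below_near_zero[OF f g \<open>stride g > 0\<close>, where \<epsilon> = "t0 / 2"])
      (use \<open>0 < t0\<close> in simp)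
  then have "3 \<le> crossing_number f g"
    using three_le_crossing_number_if_below_above[OF f g \<open>a > 1\<close> \<open>0 < p2\<close> _ \<open>t0 < 1 / a\<close>]
      \<open>g t0 < f s1\<close> \<open>a * t0 = s1\<close> \<open>0 < t0\<close> by simp
  then show False using dom by (simp add: dominated_def numeral_eq_enat)
qed

lemma integral_pos_if_continuous_nonneg:
  fixes G :: "real \<Rightarrow> real"
  assumes cont: "continuous_on {u..v} G" and nonneg: "\<And>x. x \<in> {u..v} \<Longrightarrow> 0 \<le> G x"
    and "u < v" "w \<in> {u..v}" "G w \<noteq> 0"
  shows "integral {u..v} G > 0"
proof -
  have int: "(G has_integral integral {u..v} G) {u..v}"
    using integrable_continuous_interval[OF cont] by (rule integrable_integral)
  have "integral {u..v} G \<noteq> 0"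
  proof
    assume "integral {u..v} G = 0"
    have "G w = 0"
    proof (rule has_integral_0_cbox_imp_0[of u v G w])
      show "continuous_on (cbox u v) G" using cont by (simp add: cbox_interval)
      show "(G has_integral 0) (cbox u v)"
        using int \<open>integral {u..v} G = 0\<close> by (simp add: cbox_interval)
      show "0 \<le> G x" if "x \<in> box u v" for x using nonneg that by (simp add: box_real)
      show "box u v \<noteq> {}" using \<open>u < v\<close> by (simp add: box_real)
      show "w \<in> cbox u v" using \<open>w \<in> {u..v}\<close> by (simp add: cbox_interval)
    qed
    with \<open>G w \<noteq> 0\<close> show False ..
  qed
  moreover have "integral {u..v} G \<ge> 0"
    using int nonneg by (rule has_integral_nonneg)
  ultimately show ?thesis by simp
qed

lemma has_integral_rescaled:
  fixes f :: "real \<Rightarrow> real"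
  assumes "f integrable_on {0..1}" "m > 0"
  shows "((\<lambda>x. f (m * x)) has_integral integral {0..1} f / m) {0..1 / m}"
  using has_integral_stretch_real[OF integrable_integral[OF assms(1)], of m] assms(2) by simp

lemma rescaled_integral_lt:
  fixes f g :: "real \<Rightarrow> real"
  assumes f: "f \<in> Dbreve" and g: "g \<in> Dbreve" and "0 < s" "s < r"
    and le: "\<forall>x\<in>{0..1 / r}. f (r * x) \<le> g (s * x)"
  shows "s * integral {0..1} f < r * integral {0..1} g"
proof -
  define G where "G x = g (s * x)" for x
  have "0 < r" "0 < 1 / r" "1 / r < 1 / s" using \<open>0 < s\<close> \<open>s < r\<close> by (auto simp: frac_less2)
  have int_f: "((\<lambda>x. f (r * x)) has_integral integral {0..1} f / r) {0..1 / r}"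
    using has_integral_rescaled[OF integrable_continuous_interval[OF DbreveD(1)[OF f]] \<open>0 < r\<close>] .
  have int_G: "(G has_integral integral {0..1} g / s) {0..1 / s}"
    unfolding G_def using has_integral_rescaled[OF integrable_continuous_interval[OF DbreveD(1)[OF g]] \<open>0 < s\<close>] .
  have cont_G: "continuous_on {0..1 / s} G"
    unfolding G_def using Dbreve_rescaled(1)[OF g \<open>0 < s\<close>] .
  have G_nonneg: "0 \<le> G x" if "x \<in> {0..1 / s}" for x
    unfolding G_def using DbreveD(4)[OF g, of "s * x"] that \<open>0 < s\<close> by (auto simp: field_simps)
  have "integral {0..1} f / r \<le> integral {0..1 / r} G"
    using int_f le \<open>1 / r < 1 / s\<close>
    by (intro has_integral_le[OF int_f integrable_integral] integrable_continuous_interval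
        continuous_on_subset[OF cont_G]) (auto simp: G_def)
  also have "\<dots> < integral {0..1 / r} G + integral {1 / r..1 / s} G"
  proof -
    have "G (1 / r) > 0"
      unfolding G_def using Dbreve_pos[OF g] \<open>0 < s\<close> \<open>s < r\<close> \<open>0 < r\<close> by simp
    moreover have sub: "{1 / r..1 / s} \<subseteq> {0..1 / s}"
      using \<open>0 < 1 / r\<close> by (intro atLeastatMost_subset_iff[THEN iffD2]) simp
    ultimately have "integral {1 / r..1 / s} G > 0"
      using \<open>1 / r < 1 / s\<close>
      by (intro integral_pos_if_continuous_nonneg[of _ _ _ "1 / r"] continuous_on_subset[OF cont_G sub]
          G_nonneg subsetD[OF sub]) auto
    then show ?thesis by simp
  qed
  also have "\<dots> = integral {0..1 / s} G"
    using \<open>0 < r\<close> \<open>1 / r < 1 / s\<close>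
    by (intro Henstock_Kurzweil_Integration.integral_combine integrable_continuous_interval cont_G) auto
  also have "\<dots> = integral {0..1} g / s"
    using int_G by (rule integral_unique)
  finally show ?thesis using \<open>0 < r\<close> \<open>0 < s\<close> by (simp add: field_simps)
qed

theorem lemma4p3:
  fixes f g :: "real \<Rightarrow> real"
  assumes "f \<in> Dbreve" and "g \<in> Dbreve"
    and "dominated g f"
    and "stride g > 0"
  shows "(\<forall>x\<in>{0..1 / stride f}. f (stride f * x) \<le> g (stride g * x))
         \<and> stride g * integral {0..1} f < stride f * integral {0..1} g"
proof -
  note f = assms(1) and g = assms(2) and dom = assms(3)
  have rescaled_le: "\<forall>x\<in>{0..1 / stride f}. f (stride f * x) \<le> g (stride g * x)"
    using stride_rescaled_le[OF assms] .
  have g_le_f: "\<forall>x\<in>{0..1}. g x \<le> f x" using dom by (simp add: dominated_def)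
  have "stride g \<le> stride f"
    using stride_mono[OF DbreveD(7)[OF f] DbreveD(7)[OF g] g_le_f] .
  moreover have "stride g \<noteq> stride f"
  proof
    assume same: "stride g = stride f"
    have "f y = g y" if "y \<in> {0..1}" for y
      using rescaled_le[rule_format, of "y / stride f"] g_le_f that same \<open>stride g > 0\<close>
      by (auto simp: field_simps intro: order_antisym)
    then show False
      using crossing_number_ne_2_if_eq[OF f g] dom by (simp add: dominated_def)
  qed
  ultimately have "stride g < stride f" by simp
  then show ?thesis
    using rescaled_le rescaled_integral_lt[OF f g \<open>stride g > 0\<close>] by blast
qed

end
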